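(* (a) The cell $S_{z_2,z_2}$ is the disjoint union of exactly three $G$-orbits of points $(P,Pz_2,Pz_2n)$: $n=n(0,0,1)$, dimension $7$, stabilizer $\{d(1/a^2,a,a):a\in\mathbb{R}^\times\}$; $n=n(0,1,0)$, dimension $6$, stabilizer $\left\{\begin{pmatrix}a&z&0\\0&1/a^2&0\\0&0&a\end{pmatrix}:a\in\mathbb{R}^\times,z\in\mathbb{R}\right\}$; $n=n(0,0,0)$, dimension $5$, stabilizer $D\cdot\{n(x,0,0):x\in\mathbb{R}\}$. (b) The cell $S_{z_2,s_1}$ is a single $G$-orbit, that of $(P,Pz_2,Ps_1)$, of dimension $6$ with stabilizer $D$; the cell $S_{z_2,1}$ is a single $G$-orbit, that of $(P,Pz_2,P)$, of dimension $5$ with stabilizer $D\cdot\{n(x,0,0):x\in\mathbb{R}\}$. (c) The cell $S_{z_2,s_2}$ is the disjoint union of exactly two $G$-orbits of points $(P,Pz_2,Ps_2n)$: $n=n(0,0,1)$, dimension $6$, stabilizer $\left\{\begin{pmatrix}1/a^2&x&0\\0&a&0\\0&0&a\end{pmatrix}:a\in\mathbb{R}^\times,x\in\mathbb{R}\right\}$; $n=n(0,0,0)$, dimension $5$, stabilizer $D\cdot\{n(x,0,0):x\in\mathbb{R}\}$.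
   Context: $G=\mathrm{SL}_3(\mathbb{R})$, $P$ the upper triangular matrices in $G$, $D$ the diagonal matrices in $G$; $G$ acts on $X=(P\backslash G)^3$ by right multiplication in each coordinate. $n(x,y,z)=\begin{pmatrix}1&x&y\\0&1&z\\0&0&1\end{pmatrix}$, $d(a,b,c)=\operatorname{diag}(a,b,c)$. $1$ is the identity matrix, $s_1=\begin{pmatrix}0&1&0\\1&0&0\\0&0&-1\end{pmatrix}$, $s_2=\begin{pmatrix}-1&0&0\\0&0&1\\0&1&0\end{pmatrix}$, $z_2=\begin{pmatrix}0&0&1\\-1&0&0\\0&-1&0\end{pmatrix}$. $S_{v,w}=\big(\{P\}\times P\backslash PvP\times P\backslash PwP\big)\cdot G$. The stabilizer of $(P,Pv,Pwn)$ is $P\cap v^{-1}Pv\cap (wn)^{-1}P(wn)$. *)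

theory Defs
  imports "HOL-Analysis.Analysis"
begin

type_synonym mat3 = "real^3^3"

definition mat3 :: "real \<Rightarrow> real \<Rightarrow> real \<Rightarrow> real \<Rightarrow> real \<Rightarrow> real \<Rightarrow> real \<Rightarrow> real \<Rightarrow> real \<Rightarrow> mat3" where
  "mat3 a b c d e f g h i = vector [vector [a,b,c], vector [d,e,f], vector [g,h,i]]"

definition SL3 :: "mat3 set" where
  "SL3 = {A. det A = 1}"

definition Pgrp :: "mat3 set" where
  "Pgrp = {A \<in> SL3. A$2$1 = 0 \<and> A$3$1 = 0 \<and> A$3$2 = 0}"

definition Dgrp :: "mat3 set" where
  "Dgrp = {A \<in> SL3. A$1$2 = 0 \<and> A$1$3 = 0 \<and> A$2$1 = 0 \<and> A$2$3 = 0 \<and> A$3$1 = 0 \<and> A$3$2 = 0}"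

definition nmat :: "real \<Rightarrow> real \<Rightarrow> real \<Rightarrow> mat3" where
  "nmat x y z = mat3 1 x y 0 1 z 0 0 1"

definition dmat :: "real \<Rightarrow> real \<Rightarrow> real \<Rightarrow> mat3" where
  "dmat a b c = mat3 a 0 0 0 b 0 0 0 c"

definition s1 :: mat3 where "s1 = mat3 0 1 0 1 0 0 0 0 (-1)"
definition s2 :: mat3 where "s2 = mat3 (-1) 0 0 0 0 1 0 1 0"
definition z2 :: mat3 where "z2 = mat3 0 0 1 (-1) 0 0 0 (-1) 0"

definition setmul :: "mat3 set \<Rightarrow> mat3 set \<Rightarrow> mat3 set" where
  "setmul A B = {a ** b | a b. a \<in> A \<and> b \<in> B}"

definition coset :: "mat3 \<Rightarrow> mat3 set" where
  "coset g = (\<lambda>p. p ** g) ` Pgrp"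

definition flags :: "mat3 set set" where
  "flags = coset ` SL3"

definition cact :: "mat3 set \<Rightarrow> mat3 \<Rightarrow> mat3 set" where
  "cact C g = (\<lambda>c. c ** g) ` C"

definition Xsp :: "(mat3 set \<times> mat3 set \<times> mat3 set) set" where
  "Xsp = flags \<times> flags \<times> flags"

definition act :: "mat3 set \<times> mat3 set \<times> mat3 set \<Rightarrow> mat3 \<Rightarrow> mat3 set \<times> mat3 set \<times> mat3 set" where
  "act x g = (case x of (A, B, C) \<Rightarrow> (cact A g, cact B g, cact C g))"

definition orbit :: "mat3 set \<times> mat3 set \<times> mat3 set \<Rightarrow> (mat3 set \<times> mat3 set \<times> mat3 set) set" where
  "orbit x = act x ` SL3"

definition stab :: "mat3 set \<times> mat3 set \<times> mat3 set \<Rightarrow> mat3 set" where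
  "stab x = {g \<in> SL3. act x g = x}"

definition dcoset :: "mat3 \<Rightarrow> mat3 set" where
  "dcoset v = {p ** v ** q | p q. p \<in> Pgrp \<and> q \<in> Pgrp}"

definition cell :: "mat3 \<Rightarrow> mat3 \<Rightarrow> (mat3 set \<times> mat3 set \<times> mat3 set) set" where
  "cell v w = {act (coset (mat 1), coset y, coset y') g | y y' g.
                 y \<in> dcoset v \<and> y' \<in> dcoset w \<and> g \<in> SL3}"

fun mpow :: "mat3 \<Rightarrow> nat \<Rightarrow> mat3" where
  "mpow A 0 = mat 1"
| "mpow A (Suc n) = A ** mpow A n"

definition mexp :: "mat3 \<Rightarrow> mat3" where
  "mexp A = (\<Sum>n. (1 / fact n) *\<^sub>R mpow A n)"

definition lie_alg :: "mat3 set \<Rightarrow> mat3 set" where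
  "lie_alg H = {X. \<forall>t::real. mexp (t *\<^sub>R X) \<in> H}"

definition group_dim :: "mat3 set \<Rightarrow> nat" where
  "group_dim H = dim (lie_alg H)"

text \<open>Dimension of the orbit of x: the orbit is G/G_x, so dim = dim G - dim G_x.\<close>
definition orbit_dim :: "mat3 set \<times> mat3 set \<times> mat3 set \<Rightarrow> nat" where
  "orbit_dim x = group_dim SL3 - group_dim (stab x)"

end

theory Submission
  imports Defs
begin

text \<open>
  A matrix g maps the point (P, P z2, P w) of X to (P, P z2, P w') iff g lies in P and in
  z2\<inverse> P z2, and w g w'\<inverse> lies in P. Now P \<inter> z2\<inverse> P z2 = D \<cdot> {n(x,0,0)}, the upper
  triangular matrices whose only off-diagonal entry sits in position (1,2). So the stabiliser of
  (P, P z2, P w) is {g \<in> D \<cdot> {n(x,0,0)} | w g w\<inverse> \<in> P}, and since S_{z2,w} is the union of the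
  orbits of the points (P, P z2, P w r) with r \<in> P, its orbits are obtained by normalising w r
  under P from the left and D \<cdot> {n(x,0,0)} from the right; this is a case distinction on which
  entries of r vanish.

  The dimension of a matrix group H is that of {X | exp(tX) \<in> H for all t}. A basis is given by
  explicit one-parameter subgroups of H, and differentiating the equations that define H at
  t = 0 shows that nothing else belongs to it.
\<close>

lemma mat3_nth [simp]:
  "mat3 a b c d e f g h i $ 1 $ 1 = a" "mat3 a b c d e f g h i $ 1 $ 2 = b" "mat3 a b c d e f g h i $ 1 $ 3 = c"
  "mat3 a b c d e f g h i $ 2 $ 1 = d" "mat3 a b c d e f g h i $ 2 $ 2 = e" "mat3 a b c d e f g h i $ 2 $ 3 = f"
  "mat3 a b c d e f g h i $ 3 $ 1 = g" "mat3 a b c d e f g h i $ 3 $ 2 = h" "mat3 a b c d e f g h i $ 3 $ 3 = i"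
  by (simp_all add: mat3_def)

lemma mat3_entries: "A = mat3 (A$1$1) (A$1$2) (A$1$3) (A$2$1) (A$2$2) (A$2$3) (A$3$1) (A$3$2) (A$3$3)"
  by (simp add: vec_eq_iff forall_3)

lemma mat3_cases: obtains a b c d e f g h i where "A = mat3 a b c d e f g h i"
  using mat3_entries by blast

lemma mat3_eq_iff [simp]: "mat3 a b c d e f g h i = mat3 a' b' c' d' e' f' g' h' i' \<longleftrightarrow>
   a = a' \<and> b = b' \<and> c = c' \<and> d = d' \<and> e = e' \<and> f = f' \<and> g = g' \<and> h = h' \<and> i = i'"
  by (auto simp: vec_eq_iff forall_3)

lemma mat3_mult [simp]: "mat3 a b c d e f g h i ** mat3 a' b' c' d' e' f' g' h' i' =
  mat3 (a*a'+b*d'+c*g') (a*b'+b*e'+c*h') (a*c'+b*f'+c*i')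
       (d*a'+e*d'+f*g') (d*b'+e*e'+f*h') (d*c'+e*f'+f*i')
       (g*a'+h*d'+i*g') (g*b'+h*e'+i*h') (g*c'+h*f'+i*i')"
  by (simp add: vec_eq_iff forall_3 matrix_matrix_mult_def sum_3)

lemma det_mat3 [simp]: "det (mat3 a b c d e f g h i) = a*e*i + b*f*g + c*d*h - a*f*h - b*d*i - c*e*g"
  by (simp add: det_3)

lemma mat_1_eq_mat3: "mat 1 = mat3 1 0 0 0 1 0 0 0 1"
  by (simp add: vec_eq_iff forall_3 mat_def)

lemma zero_eq_mat3: "0 = mat3 0 0 0 0 0 0 0 0 0"
  by (simp add: vec_eq_iff forall_3)

lemma scaleR_mat3 [simp]:
  "k *\<^sub>R mat3 a b c d e f g h i = mat3 (k*a) (k*b) (k*c) (k*d) (k*e) (k*f) (k*g) (k*h) (k*i)"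
  by (simp add: vec_eq_iff forall_3)

lemma add_mat3 [simp]: "mat3 a b c d e f g h i + mat3 a' b' c' d' e' f' g' h' i' =
  mat3 (a+a') (b+b') (c+c') (d+d') (e+e') (f+f') (g+g') (h+h') (i+i')"
  by (simp add: vec_eq_iff forall_3)

lemma inner_mat3 [simp]: "mat3 a b c d e f g h i \<bullet> mat3 a' b' c' d' e' f' g' h' i' =
  a*a' + b*b' + c*c' + d*d' + e*e' + f*f' + g*g' + h*h' + i*i'"
  by (simp add: inner_vec_def sum_3 mat3_def)

lemma scaleR_dmat [simp]: "t *\<^sub>R dmat a b c = dmat (t * a) (t * b) (t * c)"
  by (simp add: dmat_def)

lemma dmat_eq_iff [simp]: "dmat a b c = dmat a' b' c' \<longleftrightarrow> a = a' \<and> b = b' \<and> c = c'"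
  by (simp add: dmat_def)

lemma det_dmat [simp]: "det (dmat a b c) = a * b * c"
  by (simp add: dmat_def)

definition adj3 :: "mat3 \<Rightarrow> mat3" where
  "adj3 A = mat3 (A$2$2*A$3$3 - A$2$3*A$3$2) (A$1$3*A$3$2 - A$1$2*A$3$3) (A$1$2*A$2$3 - A$1$3*A$2$2)
                 (A$2$3*A$3$1 - A$2$1*A$3$3) (A$1$1*A$3$3 - A$1$3*A$3$1) (A$1$3*A$2$1 - A$1$1*A$2$3)
                 (A$2$1*A$3$2 - A$2$2*A$3$1) (A$1$2*A$3$1 - A$1$1*A$3$2) (A$1$1*A$2$2 - A$1$2*A$2$1)"

lemma adj3_mat3 [simp]: "adj3 (mat3 a b c d e f g h i) =
   mat3 (e*i - f*h) (c*h - b*i) (b*f - c*e) (f*g - d*i) (a*i - c*g) (c*d - a*f) (d*h - e*g) (b*g - a*h) (a*e - b*d)"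
  by (simp add: adj3_def)

lemma mult_adj3: "det A = 1 \<Longrightarrow> A ** adj3 A = mat 1"
  by (cases A rule: mat3_cases) (simp add: mat_1_eq_mat3 algebra_simps)

lemma adj3_mult: "det A = 1 \<Longrightarrow> adj3 A ** A = mat 1"
  by (cases A rule: mat3_cases) (simp add: mat_1_eq_mat3 algebra_simps)

lemma adj3_mat_1 [simp]: "adj3 (mat 1) = mat 1"
  by (simp add: mat_1_eq_mat3)

lemma det_adj3: "det A = 1 \<Longrightarrow> det (adj3 A) = 1"
  using det_mul[of A "adj3 A"] mult_adj3[of A] by simp

lemma det_z2: "det z2 = 1"
  by (simp add: z2_def)

lemma det_nmat [simp]: "det (nmat x y z) = 1"
  by (simp add: nmat_def)

lemma det_z2_nmat: "det (z2 ** nmat x y z) = 1"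
  by (simp add: det_mul det_z2)

lemma det_s2: "det s2 = 1"
  by (simp add: s2_def)

lemma det_s2_nmat: "det (s2 ** nmat x y z) = 1"
  by (simp add: det_mul det_s2)

lemma det_s1: "det s1 = 1"
  by (simp add: s1_def)

section \<open>Cosets of P and the action on triples\<close>

lemma SL3_mult: "g \<in> SL3 \<Longrightarrow> h \<in> SL3 \<Longrightarrow> g ** h \<in> SL3"
  by (simp add: SL3_def det_mul)

lemma SL3_adj3: "g \<in> SL3 \<Longrightarrow> adj3 g \<in> SL3"
  by (simp add: SL3_def det_adj3)

definition upper_tri :: "mat3 \<Rightarrow> bool" where
  "upper_tri M \<longleftrightarrow> M$2$1 = 0 \<and> M$3$1 = 0 \<and> M$3$2 = 0"

lemma upper_tri_mat3 [simp]: "upper_tri (mat3 a b c d e f g h i) \<longleftrightarrow> d = 0 \<and> g = 0 \<and> h = 0"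
  by (simp add: upper_tri_def)

lemma Pgrp_iff: "A \<in> Pgrp \<longleftrightarrow> det A = 1 \<and> upper_tri A"
  by (auto simp: Pgrp_def SL3_def upper_tri_def)

lemma Pgrp_mat3: "mat3 a b c d e f g h i \<in> Pgrp \<longleftrightarrow> d = 0 \<and> g = 0 \<and> h = 0 \<and> a * e * i = 1"
  by (auto simp: Pgrp_iff)

lemma Pgrp_subset_SL3: "Pgrp \<subseteq> SL3"
  by (auto simp: Pgrp_def)

lemma Pgrp_mult: "p \<in> Pgrp \<Longrightarrow> q \<in> Pgrp \<Longrightarrow> p ** q \<in> Pgrp"
  unfolding Pgrp_iff upper_tri_def det_mul by (simp add: matrix_matrix_mult_def sum_3)

lemma Pgrp_adj3: "p \<in> Pgrp \<Longrightarrow> adj3 p \<in> Pgrp"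
  by (cases p rule: mat3_cases) (auto simp: Pgrp_mat3 algebra_simps)

lemma mat_1_in_Pgrp: "mat 1 \<in> Pgrp"
  by (simp add: mat_1_eq_mat3 Pgrp_mat3)

lemma nmat_in_Pgrp: "nmat x y z \<in> Pgrp"
  by (simp add: nmat_def Pgrp_mat3)

lemma Pgrp_elim:
  assumes "r \<in> Pgrp"
  obtains a b c e f k where "r = mat3 a b c 0 e f 0 0 k" "a * e * k = 1"
  using assms by (cases r rule: mat3_cases) (auto simp: Pgrp_mat3)

lemma coset_mult_Pgrp: assumes "p \<in> Pgrp" shows "coset (p ** b) = coset b"
proof -
  have img: "(\<lambda>q. q ** p) ` Pgrp = Pgrp"
  proof (intro subset_antisym subsetI)
    fix q assume q: "q \<in> Pgrp"
    have "det p = 1" using assms by (simp add: Pgrp_iff)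
    then have "q = (q ** adj3 p) ** p" by (simp add: adj3_mult flip: matrix_mul_assoc)
    then show "q \<in> (\<lambda>q. q ** p) ` Pgrp"
      using Pgrp_mult Pgrp_adj3 assms q by blast
  qed (use assms Pgrp_mult in auto)
  have "coset (p ** b) = (\<lambda>q. q ** b) ` ((\<lambda>q. q ** p) ` Pgrp)"
    unfolding coset_def image_image by (simp add: matrix_mul_assoc)
  then show ?thesis by (simp add: img coset_def)
qed

lemma coset_eq_iff: assumes "det b = 1" shows "coset a = coset b \<longleftrightarrow> a ** adj3 b \<in> Pgrp"
proof
  assume "coset a = coset b"
  moreover have "a \<in> coset a"
    unfolding coset_def using mat_1_in_Pgrp by (rule rev_image_eqI) simp
  ultimately obtain p where "p \<in> Pgrp" "a = p ** b"
    unfolding coset_def by blast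
  then show "a ** adj3 b \<in> Pgrp"
    using mult_adj3[OF assms] by (simp add: matrix_mul_assoc[symmetric])
next
  assume "a ** adj3 b \<in> Pgrp"
  then have "coset ((a ** adj3 b) ** b) = coset b" by (rule coset_mult_Pgrp)
  then show "coset a = coset b" by (simp add: adj3_mult[OF assms] flip: matrix_mul_assoc)
qed

lemma coset_eq_iff_upper_tri:
  "det a = 1 \<Longrightarrow> det b = 1 \<Longrightarrow> coset a = coset b \<longleftrightarrow> upper_tri (a ** adj3 b)"
  by (simp add: coset_eq_iff Pgrp_iff det_mul det_adj3)

lemma act_act: "act (act x g) h = act x (g ** h)"
  by (cases x) (simp add: act_def cact_def image_image matrix_mul_assoc)

lemma act_mat_1: "act x (mat 1) = x"
  by (cases x) (simp add: act_def cact_def)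

lemma act_coset [simp]: "act (coset a, coset b, coset c) g = (coset (a ** g), coset (b ** g), coset (c ** g))"
  by (simp add: act_def cact_def coset_def image_image matrix_mul_assoc)

lemma orbit_mem_self: "x \<in> orbit x"
  unfolding orbit_def using act_mat_1 by (rule image_eqI[OF sym]) (simp add: SL3_def)

lemma orbit_subset_if_mem: assumes "y \<in> orbit x" shows "orbit y \<subseteq> orbit x"
proof
  fix z assume "z \<in> orbit y"
  then obtain h where "h \<in> SL3" "z = act y h" by (auto simp: orbit_def)
  moreover obtain g where "g \<in> SL3" "y = act x g" using assms by (auto simp: orbit_def)
  ultimately show "z \<in> orbit x" by (auto simp: orbit_def act_act intro: SL3_mult)
qed

lemma orbits_disjoint_if_not_mem: assumes "y \<notin> orbit x" shows "orbit x \<inter> orbit y = {}"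
proof (rule ccontr)
  assume "orbit x \<inter> orbit y \<noteq> {}"
  then obtain g h where g: "g \<in> SL3" and h: "h \<in> SL3" and gh: "act x g = act y h"
    unfolding orbit_def by blast
  have "act x (g ** adj3 h) = act (act y h) (adj3 h)"
    by (simp add: gh flip: act_act)
  also have "\<dots> = y"
    using h by (simp add: act_act act_mat_1 mult_adj3 SL3_def)
  finally have "y \<in> orbit x"
    using g h by (auto simp: orbit_def intro!: image_eqI SL3_mult SL3_adj3)
  then show False using assms by blast
qed

abbreviation triple :: "mat3 \<Rightarrow> mat3 \<Rightarrow> mat3 set \<times> mat3 set \<times> mat3 set" where
  "triple v w \<equiv> (coset (mat 1), coset v, coset w)"

lemma cell_eq_UN_orbit: "cell v w = (\<Union>r\<in>Pgrp. orbit (triple v (w ** r)))"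
proof (intro subset_antisym subsetI)
  fix z assume "z \<in> cell v w"
  then obtain p q p' q' g where pq: "p \<in> Pgrp" "q \<in> Pgrp" "p' \<in> Pgrp" "q' \<in> Pgrp" "g \<in> SL3"
    and z: "z = act (coset (mat 1), coset (p ** v ** q), coset (p' ** w ** q')) g"
    by (auto simp: cell_def dcoset_def)
  define r where "r = q' ** adj3 q"
  have q: "adj3 q ** (q ** g) = g" using pq(2) by (simp add: Pgrp_iff adj3_mult matrix_mul_assoc)
  have "coset (p ** v ** q ** g) = coset (v ** (q ** g))"
    using coset_mult_Pgrp[OF pq(1)] by (simp flip: matrix_mul_assoc)
  moreover have "coset (p' ** w ** q' ** g) = coset (w ** r ** (q ** g))"
    using coset_mult_Pgrp[OF pq(3)] by (simp add: r_def q flip: matrix_mul_assoc)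
  moreover have "coset (q ** g) = coset g" using coset_mult_Pgrp[OF pq(2)] .
  ultimately have "z = act (triple v (w ** r)) (q ** g)"
    by (simp add: z matrix_mul_assoc)
  moreover have "r \<in> Pgrp" "q ** g \<in> SL3"
    using pq Pgrp_subset_SL3 by (auto simp: r_def intro: Pgrp_mult Pgrp_adj3 SL3_mult)
  ultimately show "z \<in> (\<Union>r\<in>Pgrp. orbit (triple v (w ** r)))" by (auto simp: orbit_def)
next
  fix z assume "z \<in> (\<Union>r\<in>Pgrp. orbit (triple v (w ** r)))"
  then obtain r g where r: "r \<in> Pgrp" and g: "g \<in> SL3" and z: "z = act (triple v (w ** r)) g"
    unfolding orbit_def by blast
  have "v = mat 1 ** v ** mat 1" "w ** r = mat 1 ** w ** r" by simp_all
  then have "v \<in> dcoset v" "w ** r \<in> dcoset w"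
    unfolding dcoset_def using mat_1_in_Pgrp r by blast+
  with g show "z \<in> cell v w" unfolding cell_def z by (intro CollectI exI[of _ v] exI[of _ "w ** r"] exI[of _ g]) simp
qed

lemma cell_eq_UN_orbit_reps:
  assumes "R \<subseteq> Pgrp"
    and "\<And>r. r \<in> Pgrp \<Longrightarrow> \<exists>n\<in>R. triple v (w ** r) \<in> orbit (triple v (w ** n))"
  shows "cell v w = (\<Union>n\<in>R. orbit (triple v (w ** n)))"
  unfolding cell_eq_UN_orbit using assms orbit_subset_if_mem by blast

section \<open>The stabiliser of (P, P z2)\<close>

definition DN12 :: "mat3 set" where
  "DN12 = {mat3 a b 0 0 e 0 0 0 k | a b e k. a * e * k = 1}"

lemma dmat_in_DN12_iff [simp]: "dmat a e k \<in> DN12 \<longleftrightarrow> a * e * k = 1"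
  by (auto simp: DN12_def dmat_def)

lemma mat3_in_DN12_iff [simp]: "mat3 a b 0 0 e 0 0 0 k \<in> DN12 \<longleftrightarrow> a * e * k = 1"
  by (auto simp: DN12_def)

lemma DN12_subset_SL3: "DN12 \<subseteq> SL3"
  by (auto simp: DN12_def SL3_def)

lemma Dgrp_eq: "Dgrp = {dmat a e k | a e k. a * e * k = 1}"
proof (intro subset_antisym subsetI)
  fix d assume "d \<in> Dgrp"
  then show "d \<in> {dmat a e k | a e k. a * e * k = 1}"
    by (cases d rule: mat3_cases) (auto simp: Dgrp_def SL3_def dmat_def)
qed (auto simp: Dgrp_def SL3_def dmat_def)

lemma DN12_eq_setmul: "DN12 = setmul Dgrp {nmat x 0 0 | x. True}"
proof (intro subset_antisym subsetI)
  fix g assume "g \<in> DN12"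
  then obtain a b e k where g: "g = mat3 a b 0 0 e 0 0 0 k" and det: "a * e * k = 1"
    by (auto simp: DN12_def)
  then have "g = dmat a e k ** nmat (b / a) 0 0"
    by (auto simp: dmat_def nmat_def)
  then show "g \<in> setmul Dgrp {nmat x 0 0 | x. True}"
    using det unfolding setmul_def Dgrp_eq by blast
qed (auto simp: setmul_def Dgrp_eq DN12_def dmat_def nmat_def)

lemma stab_pair_z2_iff: "g \<in> Pgrp \<and> upper_tri (z2 ** g ** adj3 z2) \<longleftrightarrow> g \<in> DN12"
  by (cases g rule: mat3_cases) (auto simp: Pgrp_mat3 DN12_def z2_def)

lemma act_triple_z2_eq_iff:
  assumes "det w = 1" "det w' = 1"
  shows "act (triple z2 w) g = triple z2 w' \<longleftrightarrow> g \<in> DN12 \<and> upper_tri (w ** g ** adj3 w')"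
proof -
  have first: "coset g = coset (mat 1) \<longleftrightarrow> g \<in> Pgrp"
    using coset_eq_iff[of "mat 1" g] by (simp add: adj3_mat_1)
  show ?thesis
  proof (cases "g \<in> Pgrp")
    case True
    then have "det g = 1" by (simp add: Pgrp_iff)
    then show ?thesis
      using first True stab_pair_z2_iff[of g] assms det_z2
        coset_eq_iff_upper_tri[of "z2 ** g" z2] coset_eq_iff_upper_tri[of "w ** g" w']
      by (simp add: det_mul)
  qed (use first stab_pair_z2_iff in auto)
qed

lemma stab_triple_z2: "det w = 1 \<Longrightarrow> stab (triple z2 w) = {g \<in> DN12. upper_tri (w ** g ** adj3 w)}"
  using act_triple_z2_eq_iff[of w w] DN12_subset_SL3 by (auto simp: stab_def)

lemma triple_z2_in_orbit_iff:
  "det w = 1 \<Longrightarrow> det w' = 1 \<Longrightarrow>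
    triple z2 w' \<in> orbit (triple z2 w) \<longleftrightarrow> (\<exists>g\<in>DN12. upper_tri (w ** g ** adj3 w'))"
  unfolding orbit_def image_iff eq_commute[of "triple z2 w'"]
  using act_triple_z2_eq_iff[of w w'] DN12_subset_SL3 by blast

lemma triple_z2_in_orbitI:
  assumes "r \<in> Pgrp" "det w = 1" "det w' = 1" "g \<in> DN12" "upper_tri (w' ** g ** adj3 (w ** r))"
  shows "triple z2 (w ** r) \<in> orbit (triple z2 w')"
  using assms triple_z2_in_orbit_iff[of w' "w ** r"] by (auto simp: det_mul Pgrp_iff)

section \<open>The matrix exponential\<close>

lemma mpow_scaleR: "mpow (t *\<^sub>R X) n = t ^ n *\<^sub>R mpow X n"
  by (induction n) (simp_all add: matrix_scalar_ac scalar_matrix_assoc[symmetric])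

lemma mpow_entry_bound:
  assumes "\<And>i j. \<bar>X$i$j\<bar> \<le> m"
  shows "\<bar>mpow X n $ i $ j\<bar> \<le> (3 * m) ^ n"
proof (induction n arbitrary: i j)
  case 0
  then show ?case by (simp add: mat_def)
next
  case (Suc n)
  have "0 \<le> m" using assms[of 1 1] by simp
  have "\<bar>mpow X (Suc n) $ i $ j\<bar> = \<bar>\<Sum>k\<in>UNIV. X$i$k * mpow X n $ k $ j\<bar>"
    by (simp add: matrix_matrix_mult_def)
  also have "\<dots> \<le> (\<Sum>k\<in>UNIV. \<bar>X$i$k\<bar> * \<bar>mpow X n $ k $ j\<bar>)"
    by (rule order_trans[OF sum_abs]) (simp add: abs_mult)
  also have "\<dots> \<le> (\<Sum>k\<in>(UNIV::3 set). m * (3 * m) ^ n)"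
    by (intro sum_mono mult_mono) (use assms Suc.IH \<open>0 \<le> m\<close> in auto)
  also have "\<dots> = (3 * m) ^ Suc n" by (simp add: sum_3)
  finally show ?case .
qed

lemma summable_mpow_entry: "summable (\<lambda>n. mpow X n $ i $ j / fact n * t ^ n)"
proof (rule summable_comparison_test)
  define m where "m = (\<Sum>i\<in>UNIV. \<Sum>j\<in>UNIV. \<bar>X$i$j\<bar>)"
  have "\<bar>X$i$j\<bar> \<le> m" for i j
    unfolding m_def using member_le_sum[of j UNIV "\<lambda>j. \<bar>X$i$j\<bar>"]
      member_le_sum[of i UNIV "\<lambda>i. \<Sum>j\<in>UNIV. \<bar>X$i$j\<bar>"]
    by (simp add: sum_nonneg)
  then have bound: "\<bar>mpow X n $ i $ j\<bar> \<le> (3 * m) ^ n" for n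
    by (rule mpow_entry_bound)
  show "\<exists>N. \<forall>n\<ge>N. norm (mpow X n $ i $ j / fact n * t ^ n) \<le> inverse (fact n) * (3 * m * \<bar>t\<bar>) ^ n"
  proof (intro exI allI impI)
    fix n :: nat
    have "norm (mpow X n $ i $ j / fact n * t ^ n) = inverse (fact n) * (\<bar>mpow X n $ i $ j\<bar> * \<bar>t\<bar> ^ n)"
      by (simp add: abs_mult power_abs divide_inverse)
    also have "\<dots> \<le> inverse (fact n) * ((3 * m) ^ n * \<bar>t\<bar> ^ n)"
      by (intro mult_left_mono mult_right_mono bound) auto
    finally show "norm (mpow X n $ i $ j / fact n * t ^ n) \<le> inverse (fact n) * (3 * m * \<bar>t\<bar>) ^ n"
      by (simp add: power_mult_distrib)
  qed
  show "summable (\<lambda>n. inverse (fact n) * (3 * m * \<bar>t\<bar>) ^ n)"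
    by (rule summable_exp)
qed

lemma sums_matrix_entrywise:
  fixes f :: "nat \<Rightarrow> real^'n^'m"
  assumes "\<And>i j. (\<lambda>n. f n $ i $ j) sums (S $ i $ j)"
  shows "f sums S"
  unfolding sums_def
proof (intro vec_tendstoI)
  fix i j
  show "((\<lambda>n. sum f {..<n} $ i $ j) \<longlongrightarrow> S $ i $ j) sequentially"
    using assms[of i j] by (simp add: sums_def sum_component)
qed

lemma mexp_sums: "(\<lambda>n. (1 / fact n) *\<^sub>R mpow X n) sums (\<chi> i j. \<Sum>n. mpow X n $ i $ j / fact n)"
  using summable_mpow_entry[of X _ _ 1] by (intro sums_matrix_entrywise) (simp add: summable_sums)

lemma mexp_scaleR_entry: "mexp (t *\<^sub>R X) $ i $ j = (\<Sum>n. mpow X n $ i $ j / fact n * t ^ n)"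
  using mexp_sums[of "t *\<^sub>R X"] by (simp add: mexp_def sums_iff mpow_scaleR algebra_simps)

lemma has_real_derivative_mexp_entry:
  "((\<lambda>t. mexp (t *\<^sub>R X) $ i $ j) has_real_derivative X $ i $ j) (at 0)"
proof -
  have "((\<lambda>t. \<Sum>n. mpow X n $ i $ j / fact n * t ^ n) has_real_derivative
      (\<Sum>n. diffs (\<lambda>n. mpow X n $ i $ j / fact n) n * 0 ^ n)) (at 0)"
    by (rule termdiffs_strong_converges_everywhere) (rule summable_mpow_entry)
  moreover have "(\<Sum>n. diffs (\<lambda>n. mpow X n $ i $ j / fact n) n * 0 ^ n) = X $ i $ j"
    unfolding powser_zero diffs_def by simp
  ultimately show ?thesis unfolding mexp_scaleR_entry by simp
qed

lemma mexp_nilpotent: assumes "N ** N = 0" shows "mexp N = mat 1 + N"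
proof -
  have "mpow N (Suc (Suc n)) = 0" for n
    using assms by (simp add: matrix_mul_assoc)
  then have "mpow N n = 0" if "n \<notin> {0, 1}" for n
    using that by (metis insertCI not0_implies_Suc One_nat_def)
  then have "(\<lambda>n. (1 / fact n) *\<^sub>R mpow N n) sums (\<Sum>n\<in>{0, 1}. (1 / fact n) *\<^sub>R mpow N n)"
    by (intro sums_finite) auto
  then show ?thesis unfolding mexp_def by (simp add: sums_iff)
qed

lemma mexp_0 [simp]: "mexp 0 = mat 1"
  using mexp_nilpotent[of 0] by simp

lemma mpow_dmat: "mpow (dmat a b c) n = dmat (a ^ n) (b ^ n) (c ^ n)"
  by (induction n) (simp_all add: dmat_def mat_1_eq_mat3)

lemma mexp_dmat [simp]: "mexp (dmat a b c) = dmat (exp a) (exp b) (exp c)"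
proof -
  have exp_sums: "(\<lambda>n. 1 / fact n * x ^ n) sums exp x" for x :: real
    using exp_converges[of x] by (simp add: divide_inverse mult.commute)
  have "(\<lambda>n. (1 / fact n) *\<^sub>R mpow (dmat a b c) n) sums dmat (exp a) (exp b) (exp c)"
  proof (rule sums_matrix_entrywise)
    fix i j :: 3
    show "(\<lambda>n. ((1 / fact n) *\<^sub>R mpow (dmat a b c) n) $ i $ j) sums (dmat (exp a) (exp b) (exp c) $ i $ j)"
      unfolding mpow_dmat using exhaust_3[of i] exhaust_3[of j] exp_sums[of a] exp_sums[of b] exp_sums[of c]
      by (auto simp: dmat_def sums_0)
  qed
  then show ?thesis unfolding mexp_def by (simp add: sums_iff)
qed

lemma mexp_elementary [simp]:
  "mexp (mat3 0 t 0 0 0 0 0 0 0) = mat3 1 t 0 0 1 0 0 0 1"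
  "mexp (mat3 0 0 t 0 0 0 0 0 0) = mat3 1 0 t 0 1 0 0 0 1"
  "mexp (mat3 0 0 0 t 0 0 0 0 0) = mat3 1 0 0 t 1 0 0 0 1"
  "mexp (mat3 0 0 0 0 0 t 0 0 0) = mat3 1 0 0 0 1 t 0 0 1"
  "mexp (mat3 0 0 0 0 0 0 t 0 0) = mat3 1 0 0 0 1 0 t 0 1"
  "mexp (mat3 0 0 0 0 0 0 0 t 0) = mat3 1 0 0 0 1 0 0 t 1"
  by (subst mexp_nilpotent; simp add: zero_eq_mat3 mat_1_eq_mat3)+

section \<open>Lie algebras and dimensions\<close>

lemma mem_lie_alg_iff: "X \<in> lie_alg H \<longleftrightarrow> (\<forall>t. mexp (t *\<^sub>R X) \<in> H)"
  by (simp add: lie_alg_def)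

lemma lie_alg_entry_eq_0:
  assumes "X \<in> lie_alg H" "\<And>A. A \<in> H \<Longrightarrow> A $ i $ j = 0"
  shows "X $ i $ j = 0"
proof -
  have "((\<lambda>t. mexp (t *\<^sub>R X) $ i $ j) has_real_derivative 0) (at 0)"
    using assms by (simp add: mem_lie_alg_iff)
  then show ?thesis using has_real_derivative_mexp_entry DERIV_unique by blast
qed

lemma lie_alg_entry_eq:
  assumes "X \<in> lie_alg H" "\<And>A. A \<in> H \<Longrightarrow> A $ i $ j = A $ k $ l"
  shows "X $ i $ j = X $ k $ l"
proof -
  have "((\<lambda>t. mexp (t *\<^sub>R X) $ i $ j) has_real_derivative X $ k $ l) (at 0)"
    using assms has_real_derivative_mexp_entry[of X k l] by (simp add: mem_lie_alg_iff)
  then show ?thesis using has_real_derivative_mexp_entry DERIV_unique by blast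
qed

lemma lie_alg_trace_eq_0:
  assumes "X \<in> lie_alg H" "H \<subseteq> SL3"
  shows "X$1$1 + X$2$2 + X$3$3 = 0"
proof -
  have "((\<lambda>t. det (mexp (t *\<^sub>R X))) has_real_derivative X$1$1 + X$2$2 + X$3$3) (at 0)"
    unfolding det_3
    by (rule derivative_eq_intros has_real_derivative_mexp_entry refl)+ (simp add: mat_def algebra_simps)
  moreover have "((\<lambda>t. det (mexp (t *\<^sub>R X))) has_real_derivative 0) (at 0)"
    using assms by (simp add: mem_lie_alg_iff SL3_def subset_iff)
  ultimately show ?thesis using DERIV_unique by blast
qed

lemma group_dim_eq_card:
  assumes "B \<subseteq> lie_alg H" "lie_alg H \<subseteq> span B" "independent B"
  shows "group_dim H = card B"
proof -
  have "span (lie_alg H) = span B"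
    using assms(1,2) by (metis span_mono span_span subset_antisym)
  then show ?thesis
    unfolding group_dim_def by (metis dim_span dim_eq_card_independent[OF assms(3)])
qed

abbreviation "E12 \<equiv> mat3 0 1 0 0 0 0 0 0 0"
abbreviation "E13 \<equiv> mat3 0 0 1 0 0 0 0 0 0"
abbreviation "E21 \<equiv> mat3 0 0 0 1 0 0 0 0 0"
abbreviation "E23 \<equiv> mat3 0 0 0 0 0 1 0 0 0"
abbreviation "E31 \<equiv> mat3 0 0 0 0 0 0 1 0 0"
abbreviation "E32 \<equiv> mat3 0 0 0 0 0 0 0 1 0"

lemma group_dim_SL3: "group_dim SL3 = 8"
proof -
  let ?B = "{E12, E13, E21, E23, E31, E32, dmat 1 (-1) 0, dmat 1 1 (-2)}"
  have "?B \<subseteq> lie_alg SL3"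
    by (simp add: mem_lie_alg_iff SL3_def flip: exp_add)
  moreover have "lie_alg SL3 \<subseteq> span ?B"
  proof
    fix X assume X: "X \<in> lie_alg SL3"
    have "X = X$1$2 *\<^sub>R E12 + X$1$3 *\<^sub>R E13 + X$2$1 *\<^sub>R E21 + X$2$3 *\<^sub>R E23 + X$3$1 *\<^sub>R E31
        + X$3$2 *\<^sub>R E32 + (X$1$1 + X$3$3 / 2) *\<^sub>R dmat 1 (-1) 0 + (- X$3$3 / 2) *\<^sub>R dmat 1 1 (-2)"
      using lie_alg_trace_eq_0[OF X subset_refl] by (subst mat3_entries) (simp add: dmat_def)
    also have "\<dots> \<in> span ?B"
      by (intro span_add span_scale span_base) auto
    finally show "X \<in> span ?B" .
  qed
  moreover have "independent ?B"
    by (rule pairwise_orthogonal_independent) (auto simp: pairwise_insert orthogonal_def zero_eq_mat3 dmat_def)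
  ultimately have "group_dim SL3 = card ?B"
    by (rule group_dim_eq_card)
  then show ?thesis by (simp add: dmat_def)
qed

lemma lie_alg_of_subset_DN12:
  assumes "H \<subseteq> DN12" "X \<in> lie_alg H"
  shows "X$1$3 = 0" "X$2$1 = 0" "X$2$3 = 0" "X$3$1 = 0" "X$3$2 = 0" "X$1$1 + X$2$2 + X$3$3 = 0"
proof -
  have "A$1$3 = 0 \<and> A$2$1 = 0 \<and> A$2$3 = 0 \<and> A$3$1 = 0 \<and> A$3$2 = 0" if "A \<in> H" for A
    using that assms(1) by (auto simp: DN12_def)
  then show "X$1$3 = 0" "X$2$1 = 0" "X$2$3 = 0" "X$3$1 = 0" "X$3$2 = 0"
    by (blast intro: lie_alg_entry_eq_0[OF assms(2)])+
  show "X$1$1 + X$2$2 + X$3$3 = 0"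
    using assms DN12_subset_SL3 by (blast intro: lie_alg_trace_eq_0)
qed

lemma group_dim_of_subset_DN12:
  assumes "H \<subseteq> DN12" "B \<subseteq> lie_alg H" "independent B"
    and "\<And>X. X \<in> lie_alg H \<Longrightarrow> X$1$3 = 0 \<Longrightarrow> X$2$1 = 0 \<Longrightarrow> X$2$3 = 0 \<Longrightarrow> X$3$1 = 0 \<Longrightarrow>
           X$3$2 = 0 \<Longrightarrow> X$1$1 + X$2$2 + X$3$3 = 0 \<Longrightarrow> X \<in> span B"
  shows "group_dim H = card B"
  using assms lie_alg_of_subset_DN12[OF assms(1)] by (blast intro: group_dim_eq_card)

lemma exp_minus_double: "exp (- (t * 2)) = 1 / exp (t :: real) ^ 2"
  by (simp add: exp_minus inverse_eq_divide power2_eq_square flip: exp_add mult_2_right)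

lemma group_dim_DN12: "group_dim DN12 = 3"
proof -
  let ?B = "{E12, dmat 1 (-1) 0, dmat 1 1 (-2)}"
  have "group_dim DN12 = card ?B"
  proof (rule group_dim_of_subset_DN12)
    show "?B \<subseteq> lie_alg DN12"
      by (simp add: mem_lie_alg_iff flip: exp_add)
    show "independent ?B"
      by (rule pairwise_orthogonal_independent) (auto simp: pairwise_insert orthogonal_def zero_eq_mat3 dmat_def)
    fix X :: mat3 assume "X$1$3 = 0" "X$2$1 = 0" "X$2$3 = 0" "X$3$1 = 0" "X$3$2 = 0" "X$1$1 + X$2$2 + X$3$3 = 0"
    then have "X = X$1$2 *\<^sub>R E12 + (X$1$1 + X$3$3 / 2) *\<^sub>R dmat 1 (-1) 0 + (- X$3$3 / 2) *\<^sub>R dmat 1 1 (-2)"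
      by (subst mat3_entries[of X]) (simp add: dmat_def)
    also have "\<dots> \<in> span ?B"
      by (intro span_add span_scale span_base) auto
    finally show "X \<in> span ?B" .
  qed simp
  then show ?thesis by (simp add: dmat_def)
qed

lemma group_dim_Dgrp: "group_dim Dgrp = 2"
proof -
  let ?B = "{dmat 1 (-1) 0, dmat 1 1 (-2)}"
  have "group_dim Dgrp = card ?B"
  proof (rule group_dim_of_subset_DN12)
    show "Dgrp \<subseteq> DN12"
      by (auto simp: Dgrp_eq DN12_def dmat_def)
    show "?B \<subseteq> lie_alg Dgrp"
      by (auto simp: mem_lie_alg_iff Dgrp_eq simp flip: exp_add)
    show "independent ?B"
      by (rule pairwise_orthogonal_independent) (auto simp: pairwise_insert orthogonal_def zero_eq_mat3 dmat_def)
    fix X assume X: "X \<in> lie_alg Dgrp" "X$1$3 = 0" "X$2$1 = 0" "X$2$3 = 0" "X$3$1 = 0" "X$3$2 = 0"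
      "X$1$1 + X$2$2 + X$3$3 = 0"
    have "X$1$2 = 0"
      by (rule lie_alg_entry_eq_0[OF X(1)]) (auto simp: Dgrp_eq dmat_def)
    with X have "X = (X$1$1 + X$3$3 / 2) *\<^sub>R dmat 1 (-1) 0 + (- X$3$3 / 2) *\<^sub>R dmat 1 1 (-2)"
      by (subst mat3_entries[of X]) (simp add: dmat_def)
    also have "\<dots> \<in> span ?B"
      by (intro span_add span_scale span_base) auto
    finally show "X \<in> span ?B" .
  qed
  then show ?thesis by (simp add: dmat_def)
qed

lemma group_dim_stab_x1: "group_dim {dmat (1 / a^2) a a | a. a \<noteq> 0} = 1"
proof -
  let ?H = "{dmat (1 / a^2) a a | a :: real. a \<noteq> 0}"
  have "group_dim ?H = card {dmat (-2) 1 1}"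
  proof (rule group_dim_of_subset_DN12)
    show "?H \<subseteq> DN12"
      by (auto simp: power2_eq_square)
    show "{dmat (-2) 1 1} \<subseteq> lie_alg ?H"
      by (auto simp: mem_lie_alg_iff exp_minus_double)
    show "independent {dmat (-2) 1 1}"
      by (simp add: dmat_def zero_eq_mat3)
    fix X assume X: "X \<in> lie_alg ?H" "X$1$3 = 0" "X$2$1 = 0" "X$2$3 = 0" "X$3$1 = 0" "X$3$2 = 0"
      "X$1$1 + X$2$2 + X$3$3 = 0"
    have "X$1$2 = 0"
      by (rule lie_alg_entry_eq_0[OF X(1)]) (auto simp: dmat_def)
    moreover have "X$2$2 = X$3$3"
      by (rule lie_alg_entry_eq[OF X(1)]) (auto simp: dmat_def)
    ultimately have "X = X$2$2 *\<^sub>R dmat (-2) 1 1"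
      using X by (subst mat3_entries[of X]) (simp add: dmat_def)
    then show "X \<in> span {dmat (-2) 1 1}"
      by (metis span_base span_scale singletonI)
  qed
  then show ?thesis by simp
qed

lemma group_dim_stab_x2: "group_dim {mat3 a z 0 0 (1 / a^2) 0 0 0 a | a z. a \<noteq> 0} = 2"
proof -
  let ?H = "{mat3 a z 0 0 (1 / a^2) 0 0 0 a | a z :: real. a \<noteq> 0}"
  let ?B = "{E12, dmat 1 (-2) 1}"
  have "group_dim ?H = card ?B"
  proof (rule group_dim_of_subset_DN12)
    show "?H \<subseteq> DN12"
      by (auto simp: DN12_def power2_eq_square)
    show "?B \<subseteq> lie_alg ?H"
      by (simp add: mem_lie_alg_iff) (simp add: dmat_def exp_minus_double)
    show "independent ?B"
      by (rule pairwise_orthogonal_independent) (auto simp: pairwise_insert orthogonal_def zero_eq_mat3 dmat_def)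
    fix X assume X: "X \<in> lie_alg ?H" "X$1$3 = 0" "X$2$1 = 0" "X$2$3 = 0" "X$3$1 = 0" "X$3$2 = 0"
      "X$1$1 + X$2$2 + X$3$3 = 0"
    have "X$1$1 = X$3$3"
      by (rule lie_alg_entry_eq[OF X(1)]) auto
    with X have "X = X$1$2 *\<^sub>R E12 + X$1$1 *\<^sub>R dmat 1 (-2) 1"
      by (subst mat3_entries[of X]) (simp add: dmat_def)
    also have "\<dots> \<in> span ?B"
      by (intro span_add span_scale span_base) auto
    finally show "X \<in> span ?B" .
  qed
  then show ?thesis by (simp add: dmat_def)
qed

lemma group_dim_stab_u1: "group_dim {mat3 (1 / a^2) x 0 0 a 0 0 0 a | a x. a \<noteq> 0} = 2"
proof -
  let ?H = "{mat3 (1 / a^2) x 0 0 a 0 0 0 a | a x :: real. a \<noteq> 0}"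
  let ?B = "{E12, dmat (-2) 1 1}"
  have "group_dim ?H = card ?B"
  proof (rule group_dim_of_subset_DN12)
    show "?H \<subseteq> DN12"
      by (auto simp: DN12_def power2_eq_square)
    show "?B \<subseteq> lie_alg ?H"
      by (simp add: mem_lie_alg_iff) (simp add: dmat_def exp_minus_double)
    show "independent ?B"
      by (rule pairwise_orthogonal_independent) (auto simp: pairwise_insert orthogonal_def zero_eq_mat3 dmat_def)
    fix X assume X: "X \<in> lie_alg ?H" "X$1$3 = 0" "X$2$1 = 0" "X$2$3 = 0" "X$3$1 = 0" "X$3$2 = 0"
      "X$1$1 + X$2$2 + X$3$3 = 0"
    have "X$2$2 = X$3$3"
      by (rule lie_alg_entry_eq[OF X(1)]) auto
    with X have "X = X$1$2 *\<^sub>R E12 + X$2$2 *\<^sub>R dmat (-2) 1 1"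
      by (subst mat3_entries[of X]) (simp add: dmat_def)
    also have "\<dots> \<in> span ?B"
      by (intro span_add span_scale span_base) auto
    finally show "X \<in> span ?B" .
  qed
  then show ?thesis by (simp add: dmat_def)
qed

section \<open>Orbits and stabilisers in the cells\<close>

lemma stab_x1: "stab (triple z2 (z2 ** nmat 0 0 1)) = {dmat (1 / a^2) a a | a. a \<noteq> 0}"
  unfolding stab_triple_z2[OF det_z2_nmat]
  by (auto simp: DN12_def z2_def nmat_def dmat_def) (auto simp: power2_eq_square eq_divide_eq algebra_simps)

lemma stab_x2: "stab (triple z2 (z2 ** nmat 0 1 0)) = {mat3 a z 0 0 (1 / a^2) 0 0 0 a | a z. a \<noteq> 0}"
  unfolding stab_triple_z2[OF det_z2_nmat]
  by (auto simp: DN12_def z2_def nmat_def) (auto simp: power2_eq_square eq_divide_eq algebra_simps)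

lemma stab_x3: "stab (triple z2 (z2 ** nmat 0 0 0)) = DN12"
  unfolding stab_triple_z2[OF det_z2_nmat]
  by (auto simp: DN12_def z2_def nmat_def)

lemma stab_y: "stab (triple z2 s1) = Dgrp"
  unfolding stab_triple_z2[OF det_s1]
  by (auto simp: DN12_def Dgrp_eq z2_def s1_def dmat_def)

lemma stab_y': "stab (triple z2 (mat 1)) = DN12"
  unfolding stab_triple_z2[OF det_I]
  by (auto simp: DN12_def mat_1_eq_mat3)

lemma stab_u1: "stab (triple z2 (s2 ** nmat 0 0 1)) = {mat3 (1 / a^2) x 0 0 a 0 0 0 a | a x. a \<noteq> 0}"
  unfolding stab_triple_z2[OF det_s2_nmat]
  by (auto simp: DN12_def s2_def nmat_def) (auto simp: power2_eq_square eq_divide_eq algebra_simps)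

lemma stab_u2: "stab (triple z2 (s2 ** nmat 0 0 0)) = DN12"
  unfolding stab_triple_z2[OF det_s2_nmat]
  by (auto simp: DN12_def s2_def nmat_def)

lemma orbits_triple_z2_disjoint:
  assumes "det w = 1" "det w' = 1"
    and "\<And>a b e k. a * e * k = 1 \<Longrightarrow> \<not> upper_tri (w ** mat3 a b 0 0 e 0 0 0 k ** adj3 w')"
  shows "orbit (triple z2 w) \<inter> orbit (triple z2 w') = {}"
  using assms by (intro orbits_disjoint_if_not_mem) (auto simp: triple_z2_in_orbit_iff DN12_def)

lemma orbit_reps_z2_z2:
  assumes "r \<in> Pgrp"
  shows "\<exists>n\<in>{nmat 0 0 1, nmat 0 1 0, nmat 0 0 0}. triple z2 (z2 ** r) \<in> orbit (triple z2 (z2 ** n))"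
proof -
  obtain a b c e f k where r: "r = mat3 a b c 0 e f 0 0 k" and det: "a * e * k = 1"
    using assms by (rule Pgrp_elim)
  then have nz: "a \<noteq> 0" "e \<noteq> 0" "k \<noteq> 0" by auto
  note in_orbit = triple_z2_in_orbitI[OF assms det_z2 det_z2_nmat]
  consider "f \<noteq> 0" | "f = 0" "c \<noteq> 0" | "f = 0" "c = 0" by blast
  then show ?thesis
  proof cases
    case 1
    let ?g = "mat3 (a*k/f) (b*k/f - c*e*k/f^2) 0 0 e 0 0 0 f"
    have "?g \<in> DN12" "upper_tri (z2 ** nmat 0 0 1 ** ?g ** adj3 (z2 ** r))"
      using 1 nz det by (simp_all add: r z2_def nmat_def field_simps power2_eq_square)
    then show ?thesis using in_orbit by blast
  next
    case 2
    let ?g = "mat3 a b 0 0 (e*k/c) 0 0 0 c"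
    have "?g \<in> DN12" "upper_tri (z2 ** nmat 0 1 0 ** ?g ** adj3 (z2 ** r))"
      using 2 nz det by (simp_all add: r z2_def nmat_def field_simps)
    then show ?thesis using in_orbit by blast
  next
    case 3
    have "r \<in> DN12" "upper_tri (z2 ** nmat 0 0 0 ** r ** adj3 (z2 ** r))"
      using 3 det by (simp_all add: r z2_def nmat_def)
    then show ?thesis using in_orbit by blast
  qed
qed

lemma orbit_reps_z2_s1:
  assumes "r \<in> Pgrp"
  shows "triple z2 (s1 ** r) \<in> orbit (triple z2 s1)"
proof -
  obtain a b c e f k where r: "r = mat3 a b c 0 e f 0 0 k" and det: "a * e * k = 1"
    using assms by (rule Pgrp_elim)
  then have "a \<noteq> 0" by auto
  with det have "nmat (b/a) 0 0 \<in> DN12" "upper_tri (s1 ** nmat (b/a) 0 0 ** adj3 (s1 ** r))"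
    by (simp_all add: r s1_def nmat_def field_simps)
  then show ?thesis
    by (rule triple_z2_in_orbitI[OF assms det_s1 det_s1])
qed

lemma orbit_reps_z2_s2:
  assumes "r \<in> Pgrp"
  shows "\<exists>n\<in>{nmat 0 0 1, nmat 0 0 0}. triple z2 (s2 ** r) \<in> orbit (triple z2 (s2 ** n))"
proof -
  obtain a b c e f k where r: "r = mat3 a b c 0 e f 0 0 k" and det: "a * e * k = 1"
    using assms by (rule Pgrp_elim)
  then have nz: "a \<noteq> 0" "e \<noteq> 0" "k \<noteq> 0" by auto
  note in_orbit = triple_z2_in_orbitI[OF assms det_s2 det_s2_nmat]
  show ?thesis
  proof (cases "f = 0")
    case False
    let ?g = "mat3 (e/f) 0 0 0 1 0 0 0 (f/e)"
    have "?g \<in> DN12" "upper_tri (s2 ** nmat 0 0 1 ** ?g ** adj3 (s2 ** r))"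
      using False nz det by (simp_all add: r s2_def nmat_def field_simps)
    then show ?thesis using in_orbit by blast
  next
    case True
    have "mat 1 \<in> DN12" "upper_tri (s2 ** nmat 0 0 0 ** mat 1 ** adj3 (s2 ** r))"
      using True nz det by (simp_all add: mat_1_eq_mat3 r s2_def nmat_def field_simps)
    then show ?thesis using in_orbit by blast
  qed
qed

lemma orbits_disjoint_z2_z2:
  "orbit (triple z2 (z2 ** nmat 0 0 1)) \<inter> orbit (triple z2 (z2 ** nmat 0 1 0)) = {}"
  "orbit (triple z2 (z2 ** nmat 0 0 1)) \<inter> orbit (triple z2 (z2 ** nmat 0 0 0)) = {}"
  "orbit (triple z2 (z2 ** nmat 0 1 0)) \<inter> orbit (triple z2 (z2 ** nmat 0 0 0)) = {}"
  by (rule orbits_triple_z2_disjoint[OF det_z2_nmat det_z2_nmat]; auto simp: z2_def nmat_def)+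

lemma orbits_disjoint_z2_s2:
  "orbit (triple z2 (s2 ** nmat 0 0 1)) \<inter> orbit (triple z2 (s2 ** nmat 0 0 0)) = {}"
  by (rule orbits_triple_z2_disjoint[OF det_s2_nmat det_s2_nmat]) (auto simp: s2_def nmat_def)

lemma cell_z2_z2: "cell z2 z2 =
    orbit (triple z2 (z2 ** nmat 0 0 1)) \<union> orbit (triple z2 (z2 ** nmat 0 1 0)) \<union> orbit (triple z2 (z2 ** nmat 0 0 0))"
proof -
  have "cell z2 z2 = (\<Union>n\<in>{nmat 0 0 1, nmat 0 1 0, nmat 0 0 0}. orbit (triple z2 (z2 ** n)))"
    using orbit_reps_z2_z2 nmat_in_Pgrp by (intro cell_eq_UN_orbit_reps) auto
  then show ?thesis by (simp add: Un_assoc)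
qed

lemma cell_z2_s1: "cell z2 s1 = orbit (triple z2 s1)"
proof -
  have "cell z2 s1 = (\<Union>n\<in>{mat 1}. orbit (triple z2 (s1 ** n)))"
    using orbit_reps_z2_s1 mat_1_in_Pgrp by (intro cell_eq_UN_orbit_reps) auto
  then show ?thesis by simp
qed

lemma cell_z2_1: "cell z2 (mat 1) = orbit (triple z2 (mat 1))"
proof -
  have "\<exists>n\<in>{mat 1}. triple z2 (mat 1 ** r) \<in> orbit (triple z2 (mat 1 ** n))" if "r \<in> Pgrp" for r
    using coset_mult_Pgrp[OF that, of "mat 1"] orbit_mem_self by simp
  then have "cell z2 (mat 1) = (\<Union>n\<in>{mat 1}. orbit (triple z2 (mat 1 ** n)))"
    using mat_1_in_Pgrp by (intro cell_eq_UN_orbit_reps) auto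
  then show ?thesis by simp
qed

lemma cell_z2_s2: "cell z2 s2 = orbit (triple z2 (s2 ** nmat 0 0 1)) \<union> orbit (triple z2 (s2 ** nmat 0 0 0))"
proof -
  have "cell z2 s2 = (\<Union>n\<in>{nmat 0 0 1, nmat 0 0 0}. orbit (triple z2 (s2 ** n)))"
    using orbit_reps_z2_s2 nmat_in_Pgrp by (intro cell_eq_UN_orbit_reps) auto
  then show ?thesis by simp
qed

theorem mainTheorem10:
  shows
  \<comment> \<open>(a)\<close>
  "(let P0 = coset (mat 1);
        x1 = (P0, coset z2, coset (z2 ** nmat 0 0 1));
        x2 = (P0, coset z2, coset (z2 ** nmat 0 1 0));
        x3 = (P0, coset z2, coset (z2 ** nmat 0 0 0))
    in cell z2 z2 = orbit x1 \<union> orbit x2 \<union> orbit x3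
     \<and> orbit x1 \<inter> orbit x2 = {} \<and> orbit x1 \<inter> orbit x3 = {} \<and> orbit x2 \<inter> orbit x3 = {}
     \<and> orbit_dim x1 = 7 \<and> stab x1 = {dmat (1 / a^2) a a | a. a \<noteq> 0}
     \<and> orbit_dim x2 = 6 \<and> stab x2 = {mat3 a z 0 0 (1 / a^2) 0 0 0 a | a z. a \<noteq> 0}
     \<and> orbit_dim x3 = 5 \<and> stab x3 = setmul Dgrp {nmat x 0 0 | x. True})
   \<and>
  \<comment> \<open>(b)\<close>
   (let P0 = coset (mat 1);
        y = (P0, coset z2, coset s1);
        y' = (P0, coset z2, coset (mat 1))
    in cell z2 s1 = orbit y \<and> orbit_dim y = 6 \<and> stab y = Dgrp
     \<and> cell z2 (mat 1) = orbit y' \<and> orbit_dim y' = 5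
     \<and> stab y' = setmul Dgrp {nmat x 0 0 | x. True})
   \<and>
  \<comment> \<open>(c)\<close>
   (let P0 = coset (mat 1);
        u1 = (P0, coset z2, coset (s2 ** nmat 0 0 1));
        u2 = (P0, coset z2, coset (s2 ** nmat 0 0 0))
    in cell z2 s2 = orbit u1 \<union> orbit u2 \<and> orbit u1 \<inter> orbit u2 = {}
     \<and> orbit_dim u1 = 6 \<and> stab u1 = {mat3 (1 / a^2) x 0 0 a 0 0 0 a | a x. a \<noteq> 0}
     \<and> orbit_dim u2 = 5 \<and> stab u2 = setmul Dgrp {nmat x 0 0 | x. True})"
proof -
  have orbit_dim: "orbit_dim x = 8 - group_dim (stab x)" for x
    by (simp add: orbit_dim_def group_dim_SL3)
  show ?thesis
    unfolding Let_def orbit_dim DN12_eq_setmul[symmetric] stab_x1 stab_x2 stab_x3 stab_y stab_y' stab_u1 stab_u2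
      group_dim_stab_x1 group_dim_stab_x2 group_dim_DN12 group_dim_Dgrp group_dim_stab_u1
    by (simp add: cell_z2_z2 cell_z2_s1 cell_z2_1 cell_z2_s2 orbits_disjoint_z2_z2 orbits_disjoint_z2_s2)
qed

end
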